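(* Let $(X,P)$ be an $(N,s)$-tiling space and let $\epsilon\in(0,1)$. Then $(X^\epsilon,P)$ is an $(N,s^\epsilon)$-tiling space.
   Context: $X^\epsilon$ is the snowflake of $X$: the set $X$ with metric $d_X(x,y)^\epsilon$. $\mathbb{N}=\{0,1,\dots\}$. A covering structure on $X$ is a map $P$ from $\mathbb{N}$ or $\mathbb{Z}$ to coverings of $X$; $P_n$ its value, $\mathrm{dom}(P)$ its domain; $[T]_k=\{A\in P_{n+k}:A\subset T\}$ for $T\in P_n$. $(X,P)$ is an $N$-tiling set if (S1) for $n<m$ in $\mathrm{dom}(P)$, $A\in P_n$: $\mathrm{card}[A]_{m-n}=N^{m-n}$ and $A=\bigcup[A]_{m-n}$; (S2) for $A,B\in P_n$ there exist $m$ and $C\in P_m$ with $A\cup B\subset C$. Tiles are elements of the $P_n$. For $X$ a metric space ($\delta$ = diameter, $U(p,r)$ open ball, $hY$ = $Y$ with metric multiplied by $h$), $s\in(0,\infty)$, an $N$-tiling set is an $(N,s)$-pre-tiling space if (T1) there are $D_1,D_2>0$ with $D_1\le\delta(A)/s^n\le D_2$ for all $n\in\mathrm{dom}(P)$, $A\in P_n$; (T2) there is $E>0$ such that every $A\in P_n$ contains some $p_A$ with $U(p_A,Es^n)\subset A$. It is an $(N,s)$-tiling space if moreover (U) every sequence of tiles $(A_i)$ has a subsequence $(A_{\phi(i)})$ with $\delta(A_{\phi(i)})^{-1}A_{\phi(i)}$ converging in the Gromov–Hausdorff sense to $\delta(T)^{-1}T$ for some tile $T$. *)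

theory Defs
  imports "HOL-Analysis.Analysis"
begin

definition snowflake :: "('a \<Rightarrow> 'a \<Rightarrow> real) \<Rightarrow> real \<Rightarrow> 'a \<Rightarrow> 'a \<Rightarrow> real" where
  "snowflake d \<epsilon> = (\<lambda>x y. d x y powr \<epsilon>)"

text \<open>Diameter (extended real, so that unbounded sets have diameter infinity).\<close>
definition diam :: "('a \<Rightarrow> 'a \<Rightarrow> real) \<Rightarrow> 'a set \<Rightarrow> ereal" where
  "diam d A = (SUP p \<in> A \<times> A. ereal (d (fst p) (snd p)))"

definition oball :: "'a set \<Rightarrow> ('a \<Rightarrow> 'a \<Rightarrow> real) \<Rightarrow> 'a \<Rightarrow> real \<Rightarrow> 'a set" where
  "oball X d p r = {y \<in> X. d p y < r}"

definition hausdorff_distance :: "('b \<Rightarrow> 'b \<Rightarrow> real) \<Rightarrow> 'b set \<Rightarrow> 'b set \<Rightarrow> ereal" where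
  "hausdorff_distance \<rho> U V =
     max (SUP u \<in> U. INF v \<in> V. ereal (\<rho> u v)) (SUP v \<in> V. INF u \<in> U. ereal (\<rho> u v))"

definition admissible_metric ::
  "'a set \<Rightarrow> ('a \<Rightarrow> 'a \<Rightarrow> real) \<Rightarrow> 'b set \<Rightarrow> ('b \<Rightarrow> 'b \<Rightarrow> real)
    \<Rightarrow> ('a + 'b \<Rightarrow> 'a + 'b \<Rightarrow> real) \<Rightarrow> bool" where
  "admissible_metric X dX Y dY \<rho> \<longleftrightarrow>
     Metric_space (X <+> Y) \<rho> \<and>
     (\<forall>x\<in>X. \<forall>x'\<in>X. \<rho> (Inl x) (Inl x') = dX x x') \<and>
     (\<forall>y\<in>Y. \<forall>y'\<in>Y. \<rho> (Inr y) (Inr y') = dY y y')"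

text \<open>Gromov--Hausdorff distance (infimum over admissible metrics on the disjoint union
  of the Hausdorff distance of the two copies; equivalent to the infimum over all
  isometric embeddings into a common metric space).\<close>
definition gh_dist ::
  "'a set \<Rightarrow> ('a \<Rightarrow> 'a \<Rightarrow> real) \<Rightarrow> 'b set \<Rightarrow> ('b \<Rightarrow> 'b \<Rightarrow> real) \<Rightarrow> ereal" where
  "gh_dist X dX Y dY =
     (INF \<rho> \<in> {\<rho>. admissible_metric X dX Y dY \<rho>}. hausdorff_distance \<rho> (Inl ` X) (Inr ` Y))"

definition gh_converges ::
  "(nat \<Rightarrow> 'a set) \<Rightarrow> (nat \<Rightarrow> 'a \<Rightarrow> 'a \<Rightarrow> real) \<Rightarrow> 'b set \<Rightarrow> ('b \<Rightarrow> 'b \<Rightarrow> real) \<Rightarrow> bool" where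
  "gh_converges Xs ds Y dY \<longleftrightarrow> ((\<lambda>i. gh_dist (Xs i) (ds i) Y dY) \<longlonglongrightarrow> 0)"

definition scale_metric :: "real \<Rightarrow> ('a \<Rightarrow> 'a \<Rightarrow> real) \<Rightarrow> 'a \<Rightarrow> 'a \<Rightarrow> real" where
  "scale_metric h d = (\<lambda>x y. h * d x y)"

text \<open>Covering structures: a map P from dom(P) (either N or Z, embedded in int) to coverings.\<close>
definition covering :: "'a set \<Rightarrow> 'a set set \<Rightarrow> bool" where
  "covering X C \<longleftrightarrow> (\<forall>A\<in>C. A \<subseteq> X) \<and> \<Union>C = X"

definition covering_structure :: "'a set \<Rightarrow> int set \<Rightarrow> (int \<Rightarrow> 'a set set) \<Rightarrow> bool" where
  "covering_structure X D P \<longleftrightarrow> (D = {n. 0 \<le> n} \<or> D = UNIV) \<and> (\<forall>n\<in>D. covering X (P n))"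

definition children_at :: "(int \<Rightarrow> 'a set set) \<Rightarrow> int \<Rightarrow> int \<Rightarrow> 'a set \<Rightarrow> 'a set set" where
  "children_at P n k T = {A \<in> P (n + k). A \<subseteq> T}"

definition tiling_set :: "nat \<Rightarrow> 'a set \<Rightarrow> int set \<Rightarrow> (int \<Rightarrow> 'a set set) \<Rightarrow> bool" where
  "tiling_set N X D P \<longleftrightarrow> covering_structure X D P \<and>
     (\<forall>n\<in>D. \<forall>m\<in>D. n < m \<longrightarrow> (\<forall>A\<in>P n.
        finite (children_at P n (m - n) A) \<and>
        card (children_at P n (m - n) A) = N ^ nat (m - n) \<and>
        A = \<Union>(children_at P n (m - n) A))) \<and>
     (\<forall>n\<in>D. \<forall>A\<in>P n. \<forall>B\<in>P n. \<exists>m\<in>D. \<exists>C\<in>P m. A \<union> B \<subseteq> C)"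

definition tiles :: "int set \<Rightarrow> (int \<Rightarrow> 'a set set) \<Rightarrow> 'a set set" where
  "tiles D P = (\<Union>n\<in>D. P n)"

definition pre_tiling_space ::
  "nat \<Rightarrow> real \<Rightarrow> 'a set \<Rightarrow> ('a \<Rightarrow> 'a \<Rightarrow> real) \<Rightarrow> int set \<Rightarrow> (int \<Rightarrow> 'a set set) \<Rightarrow> bool" where
  "pre_tiling_space N s X d D P \<longleftrightarrow>
     Metric_space X d \<and> 0 < s \<and> tiling_set N X D P \<and>
     (\<exists>D1 D2. 0 < D1 \<and> 0 < D2 \<and> (\<forall>n\<in>D. \<forall>A\<in>P n.
        ereal (D1 * s powr of_int n) \<le> diam d A \<and> diam d A \<le> ereal (D2 * s powr of_int n))) \<and>
     (\<exists>E>0. \<forall>n\<in>D. \<forall>A\<in>P n. \<exists>p\<in>A. oball X d p (E * s powr of_int n) \<subseteq> A)"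

definition tiling_space ::
  "nat \<Rightarrow> real \<Rightarrow> 'a set \<Rightarrow> ('a \<Rightarrow> 'a \<Rightarrow> real) \<Rightarrow> int set \<Rightarrow> (int \<Rightarrow> 'a set set) \<Rightarrow> bool" where
  "tiling_space N s X d D P \<longleftrightarrow>
     pre_tiling_space N s X d D P \<and>
     (\<forall>A :: nat \<Rightarrow> 'a set. (\<forall>i. A i \<in> tiles D P) \<longrightarrow>
        (\<exists>\<phi> T. strict_mono \<phi> \<and> T \<in> tiles D P \<and>
           gh_converges (\<lambda>i. A (\<phi> i))
             (\<lambda>i. scale_metric (inverse (real_of_ereal (diam d (A (\<phi> i))))) d)
             T (scale_metric (inverse (real_of_ereal (diam d T))) d)))"

end

theory Submission
  imports Defs
begin

text \<open>For \<open>0 < e \<le> 1\<close> the map \<open>t \<mapsto> t powr e\<close> on \<open>[0,\<infinity>)\<close> is increasing and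
  subadditive, so \<open>d powr e\<close> is again a metric, and snowflaking raises diameters, ball
  radii and Hausdorff distances to the power \<open>e\<close>, while the tiling set itself is untouched.
  Hence (T1) and (T2) hold with constants \<open>D1 powr e\<close>, \<open>D2 powr e\<close>, \<open>E powr e\<close> and scale
  \<open>s powr e\<close>. For (U), rescaling by the inverse diameter commutes with snowflaking, and every
  admissible metric on a disjoint union snowflakes to an admissible metric of the snowflaked
  pieces, so Gromov--Hausdorff distance \<open>< r\<close> becomes \<open>\<le> r powr e\<close> and convergence of the
  rescaled tiles is inherited.\<close>

lemma powr_add_le_add_powr:
  fixes a b e :: real
  assumes "0 \<le> a" "0 \<le> b" "0 < e" "e \<le> 1"
  shows "(a + b) powr e \<le> a powr e + b powr e"
proof (cases "a + b = 0")
  case True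
  then show ?thesis using assms by auto
next
  case False
  then have ab: "a + b > 0" using assms by auto
  have le_powr: "t \<le> t powr e" if "0 \<le> t" "t \<le> 1" for t :: real
  proof (cases "t = 0")
    case False
    then have "t powr 1 \<le> t powr e" using that assms by (intro powr_mono') auto
    then show ?thesis using that by simp
  qed simp
  have "1 = a / (a + b) + b / (a + b)"
    using ab by (simp add: add_divide_distrib[symmetric])
  also have "\<dots> \<le> (a / (a + b)) powr e + (b / (a + b)) powr e"
    using assms ab by (intro add_mono le_powr) auto
  also have "\<dots> = (a powr e + b powr e) / (a + b) powr e"
    using assms ab by (simp add: powr_divide add_divide_distrib)
  finally show ?thesis using ab by (simp add: field_simps)
qed

lemma powr_less_powr_iff:
  fixes x y e :: real
  assumes "0 \<le> x" "0 \<le> y" "0 < e"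
  shows "x powr e < y powr e \<longleftrightarrow> x < y"
  using assms by (meson not_le powr_less_mono2 powr_mono2 less_imp_le)

lemma Metric_space_snowflake:
  assumes "Metric_space M d" "0 < e" "e \<le> 1"
  shows "Metric_space M (snowflake d e)"
proof -
  interpret Metric_space M d by fact
  show ?thesis
    unfolding snowflake_def
  proof
    fix x y z assume xyz: "x \<in> M" "y \<in> M" "z \<in> M"
    have "d x z powr e \<le> (d x y + d y z) powr e"
      using triangle[OF xyz] assms by (intro powr_mono2) auto
    also have "\<dots> \<le> d x y powr e + d y z powr e"
      using assms by (intro powr_add_le_add_powr) auto
    finally show "d x z powr e \<le> d x y powr e + d y z powr e" .
  qed (auto simp: commute)
qed

lemma diam_empty [simp]: "diam d {} = -\<infinity>"
  by (simp add: diam_def bot_ereal_def)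

lemma diam_le_iff: "diam d A \<le> ereal M \<longleftrightarrow> (\<forall>x\<in>A. \<forall>y\<in>A. d x y \<le> M)"
  by (auto simp: diam_def SUP_le_iff)

lemma diam_snowflake:
  assumes nonneg: "\<And>x y. 0 \<le> d x y" and e: "0 < e" and diam: "diam d A = ereal M"
  shows "diam (snowflake d e) A = ereal (M powr e)"
proof (rule antisym)
  have bound: "\<forall>x\<in>A. \<forall>y\<in>A. d x y \<le> M"
    using diam diam_le_iff by (metis order_refl)
  then show "diam (snowflake d e) A \<le> ereal (M powr e)"
    using nonneg e by (auto simp: diam_le_iff snowflake_def intro: powr_mono2)
  obtain a where a: "a \<in> A" using diam by fastforce
  then have "0 \<le> M" using bound nonneg[of a a] by force
  show "ereal (M powr e) \<le> diam (snowflake d e) A"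
  proof (rule ereal_le_real)
    fix z assume "diam (snowflake d e) A \<le> ereal z"
    then have snow_bound: "\<forall>x\<in>A. \<forall>y\<in>A. d x y powr e \<le> z"
      by (simp add: diam_le_iff snowflake_def)
    then have "0 \<le> z" using a by (meson order_trans powr_ge_zero)
    have "d x y \<le> z powr (1 / e)" if "x \<in> A" "y \<in> A" for x y
    proof -
      have "(d x y powr e) powr (1 / e) \<le> z powr (1 / e)"
        using snow_bound that nonneg e by (intro powr_mono2) auto
      then show ?thesis using e nonneg[of x y] by (simp add: powr_powr)
    qed
    then have "M \<le> z powr (1 / e)"
      using diam by (metis diam_le_iff ereal_less_eq(3))
    then have "M powr e \<le> (z powr (1 / e)) powr e"
      using e \<open>0 \<le> M\<close> by (intro powr_mono2) auto
    also have "\<dots> = z"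
      using e \<open>0 \<le> z\<close> by (simp add: powr_powr)
    finally show "ereal (M powr e) \<le> ereal z" by simp
  qed
qed

lemma oball_snowflake:
  assumes "\<And>x y. 0 \<le> d x y" "0 \<le> r" "0 < e"
  shows "oball X (snowflake d e) p (r powr e) = oball X d p r"
  using assms by (simp add: oball_def snowflake_def powr_less_powr_iff)

lemma scale_metric_snowflake:
  assumes "\<And>x y. 0 \<le> d x y" "0 \<le> M"
  shows "scale_metric (inverse (M powr e)) (snowflake d e)
    = snowflake (scale_metric (inverse M) d) e"
  using assms by (intro ext) (simp add: scale_metric_def snowflake_def powr_mult inverse_powr)

lemma SUP_INF_snowflake_le:
  assumes nonneg: "\<And>u v. 0 \<le> \<rho> u v" and e: "0 < e"
    and less: "(SUP u\<in>U. INF v\<in>V. ereal (\<rho> u v)) < ereal r"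
  shows "(SUP u\<in>U. INF v\<in>V. ereal (\<rho> u v powr e)) \<le> ereal (r powr e)"
proof (rule SUP_least)
  fix u assume u: "u \<in> U"
  have "(INF v\<in>V. ereal (\<rho> u v)) < ereal r"
    using less u by (meson SUP_upper le_less_trans)
  then obtain v where v: "v \<in> V" "\<rho> u v < r"
    by (auto simp: INF_less_iff)
  have "\<rho> u v powr e \<le> r powr e" using v nonneg e by (intro powr_mono2) auto
  then show "(INF v\<in>V. ereal (\<rho> u v powr e)) \<le> ereal (r powr e)"
    using v by (meson INF_lower ereal_less_eq(3) order_trans)
qed

lemma hausdorff_distance_snowflake_le:
  assumes "\<And>u v. 0 \<le> \<rho> u v" "0 < e" "hausdorff_distance \<rho> U V < ereal r"
  shows "hausdorff_distance (snowflake \<rho> e) U V \<le> ereal (r powr e)"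
  using assms SUP_INF_snowflake_le[where \<rho> = \<rho> and U = U and V = V]
    SUP_INF_snowflake_le[where \<rho> = "\<lambda>v u. \<rho> u v" and U = V and V = U]
  unfolding hausdorff_distance_def snowflake_def by auto

lemma hausdorff_distance_nonneg:
  assumes nonneg: "\<And>u v. 0 \<le> \<rho> u v" and "u \<in> U"
  shows "0 \<le> hausdorff_distance \<rho> U V"
proof -
  have "0 \<le> (INF v\<in>V. ereal (\<rho> u v))" using nonneg by (intro INF_greatest) auto
  also have "\<dots> \<le> (SUP u\<in>U. INF v\<in>V. ereal (\<rho> u v))" using \<open>u \<in> U\<close> by (rule SUP_upper)
  finally show ?thesis unfolding hausdorff_distance_def by (simp add: le_max_iff_disj)
qed

lemma admissible_metric_snowflake:
  assumes "admissible_metric X dX Y dY \<rho>" "0 < e" "e \<le> 1"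
  shows "admissible_metric X (snowflake dX e) Y (snowflake dY e) (snowflake \<rho> e)"
  using assms Metric_space_snowflake[of "X <+> Y" \<rho> e]
  unfolding admissible_metric_def by (simp add: snowflake_def)

lemma gh_dist_nonneg:
  assumes "X \<noteq> {}"
  shows "0 \<le> gh_dist X dX Y dY"
  unfolding gh_dist_def
proof (rule INF_greatest)
  fix \<rho> assume "\<rho> \<in> {\<rho>. admissible_metric X dX Y dY \<rho>}"
  then have "Metric_space (X <+> Y) \<rho>" by (simp add: admissible_metric_def)
  with assms show "0 \<le> hausdorff_distance \<rho> (Inl ` X) (Inr ` Y)"
    by (auto intro: hausdorff_distance_nonneg Metric_space.nonneg)
qed

lemma gh_dist_snowflake_le:
  assumes e: "0 < e" "e \<le> 1" and less: "gh_dist X dX Y dY < ereal r"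
  shows "gh_dist X (snowflake dX e) Y (snowflake dY e) \<le> ereal (r powr e)"
proof -
  from less obtain \<rho> where \<rho>: "admissible_metric X dX Y dY \<rho>"
      "hausdorff_distance \<rho> (Inl ` X) (Inr ` Y) < ereal r"
    unfolding gh_dist_def by (auto simp: INF_less_iff)
  then have "Metric_space (X <+> Y) \<rho>" by (simp add: admissible_metric_def)
  then have nonneg: "\<And>u v. 0 \<le> \<rho> u v" by (rule Metric_space.nonneg)
  have "gh_dist X (snowflake dX e) Y (snowflake dY e)
      \<le> hausdorff_distance (snowflake \<rho> e) (Inl ` X) (Inr ` Y)"
    unfolding gh_dist_def using admissible_metric_snowflake[OF \<rho>(1) e]
    by (intro INF_lower) auto
  also have "\<dots> \<le> ereal (r powr e)"
    using hausdorff_distance_snowflake_le[OF nonneg e(1) \<rho>(2)] .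
  finally show ?thesis .
qed

lemma gh_converges_snowflake:
  assumes e: "0 < e" "e \<le> 1" and nonempty: "\<And>i. Xs i \<noteq> {}"
    and conv: "gh_converges Xs ds Y dY"
  shows "gh_converges Xs (\<lambda>i. snowflake (ds i) e) Y (snowflake dY e)"
  unfolding gh_converges_def
proof (rule order_tendstoI)
  fix a :: ereal assume "a < 0"
  then show "\<forall>\<^sub>F i in sequentially. a < gh_dist (Xs i) (snowflake (ds i) e) Y (snowflake dY e)"
    using gh_dist_nonneg[OF nonempty] by (intro always_eventually allI) (blast intro: less_le_trans)
next
  fix a :: ereal assume "0 < a"
  then obtain b where "0 < ereal b" and b_less: "ereal b < a"
    using ereal_dense2 by blast
  then have "0 < b" by simp
  have "\<forall>\<^sub>F i in sequentially. gh_dist (Xs i) (ds i) Y dY < ereal (b powr (1 / e))"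
    using conv unfolding gh_converges_def by (rule order_tendstoD(2)) (use \<open>0 < b\<close> in simp)
  then show "\<forall>\<^sub>F i in sequentially. gh_dist (Xs i) (snowflake (ds i) e) Y (snowflake dY e) < a"
  proof (rule eventually_mono)
    fix i assume "gh_dist (Xs i) (ds i) Y dY < ereal (b powr (1 / e))"
    then have "gh_dist (Xs i) (snowflake (ds i) e) Y (snowflake dY e) \<le> ereal ((b powr (1 / e)) powr e)"
      by (rule gh_dist_snowflake_le[OF e])
    also have "(b powr (1 / e)) powr e = b"
      using \<open>0 < b\<close> e by (simp add: powr_powr)
    finally show "gh_dist (Xs i) (snowflake (ds i) e) Y (snowflake dY e) < a"
      using b_less by simp
  qed
qed

lemma pre_tiling_space_diam_tile:
  assumes "pre_tiling_space N s X d D P" "n \<in> D" "A \<in> P n"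
  obtains M where "diam d A = ereal M" "0 < M"
proof -
  obtain D1 D2 where "0 < D1" and bounds: "ereal (D1 * s powr of_int n) \<le> diam d A"
      "diam d A \<le> ereal (D2 * s powr of_int n)"
    using assms unfolding pre_tiling_space_def by blast
  moreover have "0 < s" using assms(1) by (simp add: pre_tiling_space_def)
  ultimately have "0 < D1 * s powr of_int n" by simp
  with bounds show thesis
    using that by (cases "diam d A") auto
qed

lemma pre_tiling_space_snowflake:
  assumes pre: "pre_tiling_space N s X d D P" and e: "0 < e" "e \<le> 1"
  shows "pre_tiling_space N (s powr e) X (snowflake d e) D P"
proof -
  have s: "0 < s" and tiling: "tiling_set N X D P" and ms: "Metric_space X d"
    using pre by (simp_all add: pre_tiling_space_def)
  have nonneg: "\<And>x y. 0 \<le> d x y" using ms by (rule Metric_space.nonneg)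
  obtain D1 D2 where D12: "0 < D1" "0 < D2" and bounds: "\<forall>n\<in>D. \<forall>A\<in>P n.
      ereal (D1 * s powr of_int n) \<le> diam d A \<and> diam d A \<le> ereal (D2 * s powr of_int n)"
    using pre unfolding pre_tiling_space_def by (elim conjE exE) blast
  obtain E where "0 < E" and balls:
      "\<forall>n\<in>D. \<forall>A\<in>P n. \<exists>p\<in>A. oball X d p (E * s powr of_int n) \<subseteq> A"
    using pre unfolding pre_tiling_space_def by (elim conjE exE) blast
  have rescale: "(c * s powr of_int n) powr e = c powr e * (s powr e) powr of_int n"
    if "0 \<le> c" for c n
    using that s by (simp add: powr_mult powr_powr mult.commute)
  have diam_bounds: "ereal (D1 powr e * (s powr e) powr of_int n) \<le> diam (snowflake d e) A \<and>
      diam (snowflake d e) A \<le> ereal (D2 powr e * (s powr e) powr of_int n)"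
    if tile: "n \<in> D" "A \<in> P n" for n A
  proof -
    obtain M where M: "diam d A = ereal M" "0 < M"
      using pre_tiling_space_diam_tile[OF pre tile] .
    have "(D1 * s powr of_int n) powr e \<le> M powr e" "M powr e \<le> (D2 * s powr of_int n) powr e"
      using bounds[rule_format, OF tile] M D12 s e by (auto intro!: powr_mono2)
    then show ?thesis
      using D12 by (simp add: diam_snowflake[OF nonneg e(1) M(1)] rescale)
  qed
  have inner_balls: "\<exists>p\<in>A. oball X (snowflake d e) p (E powr e * (s powr e) powr of_int n) \<subseteq> A"
    if "n \<in> D" "A \<in> P n" for n A
    using balls[rule_format, OF that] \<open>0 < E\<close> s e
    by (simp add: rescale[symmetric] oball_snowflake[OF nonneg])
  show ?thesis
    unfolding pre_tiling_space_def
    using Metric_space_snowflake[OF ms e] s tiling D12 \<open>0 < E\<close> diam_bounds inner_balls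
    by (intro conjI exI[of _ "D1 powr e"] exI[of _ "D2 powr e"] exI[of _ "E powr e"] ballI)
      simp_all
qed

lemma tiling_space_snowflake:
  assumes tiling: "tiling_space N s X d D P" and e: "0 < e" "e \<le> 1"
  shows "tiling_space N (s powr e) X (snowflake d e) D P"
proof -
  have pre: "pre_tiling_space N s X d D P" using tiling by (simp add: tiling_space_def)
  have "Metric_space X d" using pre by (simp add: pre_tiling_space_def)
  then have nonneg: "\<And>x y. 0 \<le> d x y" by (rule Metric_space.nonneg)
  have nonempty: "B \<noteq> {}"
    and rescaled: "scale_metric (inverse (real_of_ereal (diam (snowflake d e) B))) (snowflake d e)
      = snowflake (scale_metric (inverse (real_of_ereal (diam d B))) d) e"
    if B: "B \<in> tiles D P" for B
  proof -
    obtain n where "n \<in> D" "B \<in> P n" using B unfolding tiles_def by blast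
    then obtain M where M: "diam d B = ereal M" "0 < M"
      using pre_tiling_space_diam_tile[OF pre] by blast
    then show "B \<noteq> {}" by auto
    show "scale_metric (inverse (real_of_ereal (diam (snowflake d e) B))) (snowflake d e)
      = snowflake (scale_metric (inverse (real_of_ereal (diam d B))) d) e"
      using M by (simp add: diam_snowflake[OF nonneg e(1)] scale_metric_snowflake[OF nonneg])
  qed
  show ?thesis
    unfolding tiling_space_def
  proof (intro conjI allI impI)
    show "pre_tiling_space N (s powr e) X (snowflake d e) D P"
      using pre_tiling_space_snowflake[OF pre e] .
    fix A :: "nat \<Rightarrow> 'a set" assume A: "\<forall>i. A i \<in> tiles D P"
    obtain \<phi> T where \<phi>T: "strict_mono \<phi>" "T \<in> tiles D P" and conv: "gh_converges (\<lambda>i. A (\<phi> i))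
        (\<lambda>i. scale_metric (inverse (real_of_ereal (diam d (A (\<phi> i))))) d)
        T (scale_metric (inverse (real_of_ereal (diam d T))) d)"
      using tiling[unfolded tiling_space_def, THEN conjunct2, THEN spec[of _ A], THEN mp, OF A] by blast
    have "\<And>i. A (\<phi> i) \<noteq> {}" using A nonempty by blast
    then have "gh_converges (\<lambda>i. A (\<phi> i))
        (\<lambda>i. snowflake (scale_metric (inverse (real_of_ereal (diam d (A (\<phi> i))))) d) e)
        T (snowflake (scale_metric (inverse (real_of_ereal (diam d T))) d) e)"
      by (rule gh_converges_snowflake[OF e _ conv])
    then show "\<exists>\<phi> T. strict_mono \<phi> \<and> T \<in> tiles D P \<and> gh_converges (\<lambda>i. A (\<phi> i))
        (\<lambda>i. scale_metric (inverse (real_of_ereal (diam (snowflake d e) (A (\<phi> i))))) (snowflake d e))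
        T (scale_metric (inverse (real_of_ereal (diam (snowflake d e) T))) (snowflake d e))"
      using A \<phi>T by (intro exI[of _ \<phi>] exI[of _ T]) (simp add: rescaled)
  qed
qed

theorem proposition3p13:
  fixes N :: nat and s \<epsilon> :: real and X :: "'a set" and d :: "'a \<Rightarrow> 'a \<Rightarrow> real"
    and D :: "int set" and P :: "int \<Rightarrow> 'a set set"
  assumes "tiling_space N s X d D P"
    and "0 < \<epsilon>" and "\<epsilon> < 1"
  shows "tiling_space N (s powr \<epsilon>) X (snowflake d \<epsilon>) D P"
  using tiling_space_snowflake[OF assms(1,2) less_imp_le[OF assms(3)]] .

end
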